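(* Let $\Psi\in\mathcal{H}$, and let $\ell_\Psi\in\mathbb{R}^2$ be its constant value on $\mathcal{S}_0$. Then there exists a family $(\tilde\Psi^\varepsilon)_{0<\varepsilon\le1}$ of smooth, compactly supported, divergence-free vector fields on $\overline{\mathcal{F}_0}$ such that $\tilde\Psi^\varepsilon=\ell_\Psi$ on $\partial\mathcal{S}_0$ for every $\varepsilon$, and $\|\nabla\tilde\Psi^\varepsilon\|_{L^\infty(\mathcal{F}_0)}\to0$ as $\varepsilon\to0^+$.
   Context: $\mathcal{S}_0$ is the closed unit disk in $\mathbb{R}^2$, $\mathcal{F}_0:=\mathbb{R}^2\setminus\mathcal{S}_0$, and $\mathcal{H}:=\{\Psi\in L^2(\mathbb{R}^2;\mathbb{R}^2):\operatorname{div}\Psi=0\text{ in }\mathbb{R}^2,\ \nabla\Psi=0\text{ in }\mathcal{S}_0\}$ (so each $\Psi\in\mathcal{H}$ is constant on $\mathcal{S}_0$). *)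

theory Defs
  imports "HOL-Analysis.Analysis"
begin

fun iter_dir_deriv :: "'a::real_normed_vector list \<Rightarrow> ('a \<Rightarrow> 'b::real_normed_vector) \<Rightarrow> 'a \<Rightarrow> 'b" where
  "iter_dir_deriv [] f = f"
| "iter_dir_deriv (v # vs) f = (\<lambda>x. frechet_derivative (iter_dir_deriv vs f) (at x) v)"

definition smooth :: "('a::real_normed_vector \<Rightarrow> 'b::real_normed_vector) \<Rightarrow> bool" where
  "smooth f \<longleftrightarrow> (\<forall>vs x. iter_dir_deriv vs f differentiable (at x))"

definition test_fun :: "(real^2 \<Rightarrow> real) \<Rightarrow> bool" where
  "test_fun \<phi> \<longleftrightarrow> smooth \<phi> \<and> compact (closure {x. \<phi> x \<noteq> 0})"

definition grad :: "(real^2 \<Rightarrow> real) \<Rightarrow> real^2 \<Rightarrow> real^2" where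
  "grad \<phi> x = (\<Sum>i\<in>Basis. frechet_derivative \<phi> (at x) i *\<^sub>R i)"

definition divergence :: "(real^2 \<Rightarrow> real^2) \<Rightarrow> real^2 \<Rightarrow> real" where
  "divergence F x = (\<Sum>i\<in>Basis. frechet_derivative F (at x) i \<bullet> i)"

definition S0 :: "(real^2) set" where "S0 = cball 0 1"
definition F0 :: "(real^2) set" where "F0 = - S0"

text \<open>The space H: L^2 vector fields, distributionally divergence-free on R^2,
  with vanishing distributional gradient in (the interior of) S0.\<close>
definition in_H :: "(real^2 \<Rightarrow> real^2) \<Rightarrow> bool" where
  "in_H \<Psi> \<longleftrightarrow>
     \<Psi> \<in> borel_measurable lebesgue \<and>
     integrable lebesgue (\<lambda>x. (norm (\<Psi> x))\<^sup>2) \<and>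
     (\<forall>\<phi>. test_fun \<phi> \<longrightarrow> integral\<^sup>L lebesgue (\<lambda>x. \<Psi> x \<bullet> grad \<phi> x) = 0) \<and>
     (\<forall>\<phi> v. test_fun \<phi> \<and> closure {x. \<phi> x \<noteq> 0} \<subseteq> interior S0 \<longrightarrow>
        integral\<^sup>L lebesgue (\<lambda>x. frechet_derivative \<phi> (at x) v *\<^sub>R \<Psi> x) = 0)"

end

theory Submission
  imports Defs "HOL-Computational_Algebra.Polynomial"
begin

(* Only the constant l matters; the hypotheses on Psi merely identify l as its value on the disk.
   Let h be a smooth step (1 on t <= 0, 0 on t >= 1) and u_e(x) = e ln((1 + |x|^2) / 2), which
   vanishes on the unit circle and grows only logarithmically. The field is the rotated gradient
   of the stream function h(u_e(x)) (perp l . x): it is divergence free, equals l on the circle and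
   vanishes where u_e >= 1. Each derivative of h o u_e gains a factor e / |x|, so the gradient of
   the field is O(e |l|) uniformly. Smoothness follows because every building block lies in a
   class of functions closed under differentiation. *)

lemma smooth_if_closed_under_derivatives:
  assumes "P f"
    and "\<And>g. P g \<Longrightarrow> (\<forall>x. g differentiable (at x)) \<and> (\<forall>v. P (\<lambda>x. frechet_derivative g (at x) v))"
  shows "smooth f"
proof -
  have "P (iter_dir_deriv vs f)" for vs
    by (induction vs) (use assms in auto)
  then show ?thesis
    unfolding smooth_def using assms(2) by blast
qed

inductive_set smooth_scalars :: "('a::real_inner \<Rightarrow> real) set" where
  const: "(\<lambda>x. c) \<in> smooth_scalars"
| linear: "bounded_linear L \<Longrightarrow> L \<in> smooth_scalars"
| inner_self: "(\<lambda>x. x \<bullet> x) \<in> smooth_scalars"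
| add: "f \<in> smooth_scalars \<Longrightarrow> g \<in> smooth_scalars \<Longrightarrow> (\<lambda>x. f x + g x) \<in> smooth_scalars"
| mult: "f \<in> smooth_scalars \<Longrightarrow> g \<in> smooth_scalars \<Longrightarrow> (\<lambda>x. f x * g x) \<in> smooth_scalars"
| inverse: "f \<in> smooth_scalars \<Longrightarrow> (\<And>x. f x \<noteq> 0) \<Longrightarrow> (\<lambda>x. inverse (f x)) \<in> smooth_scalars"
| ln: "f \<in> smooth_scalars \<Longrightarrow> (\<And>x. f x > 0) \<Longrightarrow> (\<lambda>x. ln (f x)) \<in> smooth_scalars"
| compose: "(\<forall>k t. (hs k has_real_derivative hs (Suc k) t) (at t)) \<Longrightarrow> f \<in> smooth_scalars \<Longrightarrow>
    (\<lambda>x. hs n (f x)) \<in> smooth_scalars"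

lemma smooth_scalars_uminus: "f \<in> smooth_scalars \<Longrightarrow> (\<lambda>x. - f x) \<in> smooth_scalars"
proof -
  assume "f \<in> smooth_scalars"
  then have "(\<lambda>x. (-1) * f x) \<in> smooth_scalars"
    by (intro smooth_scalars.mult smooth_scalars.const)
  then show ?thesis by simp
qed

lemma smooth_scalars_diff:
  "f \<in> smooth_scalars \<Longrightarrow> g \<in> smooth_scalars \<Longrightarrow> (\<lambda>x. f x - g x) \<in> smooth_scalars"
  using smooth_scalars.add[OF _ smooth_scalars_uminus, of f g] by simp

lemma smooth_scalars_divide:
  "f \<in> smooth_scalars \<Longrightarrow> g \<in> smooth_scalars \<Longrightarrow> (\<And>x. g x \<noteq> 0) \<Longrightarrow> (\<lambda>x. f x / g x) \<in> smooth_scalars"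
  using smooth_scalars.mult[OF _ smooth_scalars.inverse, of f g] by (simp add: divide_inverse)

lemma smooth_scalars_has_derivative:
  assumes "f \<in> smooth_scalars"
  shows "\<exists>D. (\<forall>x. (f has_derivative D x) (at x)) \<and> (\<forall>v. (\<lambda>x. D x v) \<in> smooth_scalars)"
  using assms
proof induction
  case (const c)
  show ?case by (intro exI[of _ "\<lambda>x v. 0"]) (auto intro: smooth_scalars.const)
next
  case (linear L)
  then show ?case
    by (intro exI[of _ "\<lambda>x. L"]) (auto intro: smooth_scalars.const bounded_linear_imp_has_derivative)
next
  case inner_self
  show ?case
    by (intro exI[of _ "\<lambda>x v. 2 * (v \<bullet> x)"])
      (auto intro!: derivative_eq_intros smooth_scalars.linear bounded_linear_const_mult
        bounded_linear_inner_right simp: inner_commute)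
next
  case (add f g)
  then obtain Df Dg where "\<forall>x. (f has_derivative Df x) (at x)" "\<forall>v. (\<lambda>x. Df x v) \<in> smooth_scalars"
     "\<forall>x. (g has_derivative Dg x) (at x)" "\<forall>v. (\<lambda>x. Dg x v) \<in> smooth_scalars" by blast
  then show ?case
    by (intro exI[of _ "\<lambda>x v. Df x v + Dg x v"]) (auto intro!: derivative_eq_intros smooth_scalars.add)
next
  case (mult f g)
  then obtain Df Dg where "\<forall>x. (f has_derivative Df x) (at x)" "\<forall>v. (\<lambda>x. Df x v) \<in> smooth_scalars"
     "\<forall>x. (g has_derivative Dg x) (at x)" "\<forall>v. (\<lambda>x. Dg x v) \<in> smooth_scalars" by blast
  with mult show ?case
    by (intro exI[of _ "\<lambda>x v. f x * Dg x v + Df x v * g x"])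
      (auto intro!: derivative_eq_intros smooth_scalars.add smooth_scalars.mult)
next
  case (inverse f)
  then obtain Df where "\<forall>x. (f has_derivative Df x) (at x)" "\<forall>v. (\<lambda>x. Df x v) \<in> smooth_scalars"
    by blast
  with inverse show ?case
    by (intro exI[of _ "\<lambda>x v. - (inverse (f x) * Df x v * inverse (f x))"])
      (auto intro!: derivative_eq_intros smooth_scalars_uminus smooth_scalars.mult smooth_scalars.inverse)
next
  case (ln f)
  then obtain Df where Df: "\<forall>x. (f has_derivative Df x) (at x)" "\<forall>v. (\<lambda>x. Df x v) \<in> smooth_scalars"
    by blast
  have "((\<lambda>x. ln (f x)) has_derivative (\<lambda>v. inverse (f x) * Df x v)) (at x)" for x
    using has_derivative_compose[OF Df(1)[rule_format] DERIV_ln[of "f x", unfolded has_field_derivative_def]]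
      ln.hyps(2) by simp
  with ln Df show ?case
    by (intro exI[of _ "\<lambda>x v. inverse (f x) * Df x v"])
      (auto intro!: smooth_scalars.mult smooth_scalars.inverse simp: less_imp_neq[symmetric])
next
  case (compose hs f n)
  then obtain Df where Df: "\<forall>x. (f has_derivative Df x) (at x)" "\<forall>v. (\<lambda>x. Df x v) \<in> smooth_scalars"
    by blast
  have "((\<lambda>x. hs n (f x)) has_derivative (\<lambda>v. hs (Suc n) (f x) * Df x v)) (at x)" for x
    using has_derivative_compose[OF Df(1)[rule_format] compose(1)[rule_format, unfolded has_field_derivative_def]] .
  moreover have "(\<lambda>x. hs (Suc n) (f x) * Df x v) \<in> smooth_scalars" for v
    by (rule smooth_scalars.mult[OF smooth_scalars.compose[OF compose(1,2)] Df(2)[rule_format]])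
  ultimately show ?case
    by (intro exI[of _ "\<lambda>x v. hs (Suc n) (f x) * Df x v"]) auto
qed

lemma smooth_scalars_deriv:
  fixes f :: "real \<Rightarrow> real"
  assumes "f \<in> smooth_scalars"
  shows "deriv f \<in> smooth_scalars" "(f has_real_derivative deriv f x) (at x)"
proof -
  obtain D where D: "\<forall>x. (f has_derivative D x) (at x)" "\<forall>v. (\<lambda>x. D x v) \<in> smooth_scalars"
    using smooth_scalars_has_derivative[OF assms] by blast
  have D1: "(f has_real_derivative D x 1) (at x)" for x
  proof -
    have "linear (D x)"
      using D(1) has_derivative_linear by blast
    then have "D x v = D x 1 * v" for v
      using linear_scale[of "D x" v 1] by (simp add: mult.commute)
    then have "D x = (\<lambda>v. D x 1 * v)" by blast
    then show ?thesis
      using D(1) by (metis has_field_derivative_def)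
  qed
  then have "deriv f = (\<lambda>x. D x 1)"
    using DERIV_imp_deriv by blast
  with D1 D(2) show "deriv f \<in> smooth_scalars" "(f has_real_derivative deriv f x) (at x)"
    by auto
qed

definition smooth_fields :: "('a::real_inner \<Rightarrow> 'b::euclidean_space) set" where
  "smooth_fields = {F. \<forall>i\<in>Basis. (\<lambda>x. F x \<bullet> i) \<in> smooth_scalars}"

lemma smooth_fields_derivative:
  assumes "F \<in> smooth_fields"
  shows "F differentiable (at x)" "(\<lambda>x. frechet_derivative F (at x) v) \<in> smooth_fields"
proof -
  have "\<forall>i\<in>Basis. \<exists>D. (\<forall>x. ((\<lambda>x. F x \<bullet> i) has_derivative D x) (at x)) \<and>
      (\<forall>v. (\<lambda>x. D x v) \<in> smooth_scalars)"
    using assms smooth_scalars_has_derivative unfolding smooth_fields_def by blast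
  then obtain D where D: "\<And>i. i \<in> Basis \<Longrightarrow>
      (\<forall>x. ((\<lambda>x. F x \<bullet> i) has_derivative D i x) (at x)) \<and> (\<forall>v. (\<lambda>x. D i x v) \<in> smooth_scalars)"
    by metis
  define DF where "DF x v = (\<Sum>i\<in>Basis. D i x v *\<^sub>R i)" for x v
  have DF_component: "DF x v \<bullet> i = D i x v" if "i \<in> Basis" for x v i
    unfolding DF_def by (rule inner_sum_left_Basis[OF that])
  have DF: "(F has_derivative DF x) (at x)" for x
  proof (rule has_derivative_componentwise_within[THEN iffD2, rule_format])
    fix i :: 'b assume i: "i \<in> Basis"
    have "(\<lambda>v. DF x v \<bullet> i) = D i x"
      using DF_component[OF i] by blast
    with D[OF i] show "((\<lambda>x. F x \<bullet> i) has_derivative (\<lambda>v. DF x v \<bullet> i)) (at x)"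
      by simp
  qed
  then have "frechet_derivative F (at x) = DF x" for x
    by (rule frechet_derivative_at[symmetric])
  with D show "(\<lambda>x. frechet_derivative F (at x) v) \<in> smooth_fields"
    by (simp add: smooth_fields_def DF_component)
  show "F differentiable (at x)"
    using DF differentiable_def by blast
qed

lemma smooth_fields_smooth: "F \<in> smooth_fields \<Longrightarrow> smooth F"
  using smooth_if_closed_under_derivatives[where P = "\<lambda>F. F \<in> smooth_fields"] smooth_fields_derivative
  by blast

lemma poly_times_exp_minus_tendsto_0: "((\<lambda>y. poly p y * exp (- y)) \<longlongrightarrow> (0::real)) at_top"
proof -
  have "((\<lambda>y. \<Sum>i\<le>degree p. coeff p i * (y ^ i / exp y)) \<longlongrightarrow> (\<Sum>i\<le>degree p. coeff p i * 0)) at_top"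
    by (intro tendsto_intros tendsto_power_div_exp_0)
  moreover have "(\<Sum>i\<le>degree p. coeff p i * (y ^ i / exp y)) = poly p y * exp (- y)" for y :: real
    by (simp add: poly_altdef sum_distrib_left exp_minus divide_inverse mult_ac)
  ultimately show ?thesis by simp
qed

(* d/dt (P(1/t) exp(-1/t)) = Q(1/t) exp(-1/t) with Q(y) = y^2 (P(y) - P'(y)), so flat_exp n is the
   n-th derivative of exp(-1/t), extended by 0 to t <= 0. *)
fun flat_poly :: "nat \<Rightarrow> real poly" where
  "flat_poly 0 = 1"
| "flat_poly (Suc n) = monom 1 2 * (flat_poly n - pderiv (flat_poly n))"

definition flat_exp :: "nat \<Rightarrow> real \<Rightarrow> real" where
  "flat_exp n t = (if t > 0 then poly (flat_poly n) (inverse t) * exp (- inverse t) else 0)"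

lemma flat_exp_has_derivative: "(flat_exp n has_real_derivative flat_exp (Suc n) t) (at t)"
proof (cases t "0::real" rule: linorder_cases)
  case less
  have "((\<lambda>t. 0) has_real_derivative flat_exp (Suc n) t) (at t)"
    using less by (simp add: flat_exp_def)
  then show ?thesis
    by (rule has_field_derivative_transform_within_open[where S = "{..<0}"])
      (use less in \<open>auto simp: flat_exp_def\<close>)
next
  case equal
  have "((\<lambda>y. flat_exp n y / y) \<longlongrightarrow> 0) (at_left 0)"
  proof (rule Lim_transform_eventually[OF tendsto_const])
    have "\<forall>\<^sub>F y in at_left 0. y \<in> {-1<..<(0::real)}"
      by (rule eventually_at_left_real) simp
    then show "\<forall>\<^sub>F y in at_left 0. 0 = flat_exp n y / y"
      by eventually_elim (auto simp: flat_exp_def)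
  qed
  moreover have "((\<lambda>y. flat_exp n y / y) \<longlongrightarrow> 0) (at_right 0)"
    unfolding filterlim_at_right_to_top
  proof (rule Lim_transform_eventually[OF poly_times_exp_minus_tendsto_0[of "flat_poly n * [:0, 1:]"]])
    show "\<forall>\<^sub>F y in at_top. poly (flat_poly n * [:0, 1:]) y * exp (- y) = flat_exp n (inverse y) / inverse y"
      using eventually_gt_at_top[of 0] by eventually_elim (simp add: flat_exp_def mult_ac divide_inverse)
  qed
  ultimately have "((\<lambda>y. flat_exp n y / y) \<longlongrightarrow> 0) (at 0)"
    by (simp add: filterlim_at_split)
  with equal show ?thesis
    by (simp add: has_field_derivative_iff flat_exp_def)
next
  case greater
  have "((\<lambda>t. poly (flat_poly n) (inverse t) * exp (- inverse t)) has_real_derivative flat_exp (Suc n) t) (at t)"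
    using greater
    by (auto intro!: derivative_eq_intros simp: flat_exp_def poly_monom algebra_simps power2_eq_square)
  then show ?thesis
    by (rule has_field_derivative_transform_within_open[where S = "{0<..}"])
      (use greater in \<open>auto simp: flat_exp_def\<close>)
qed

lemma flat_exp_0_pos: "t > 0 \<Longrightarrow> flat_exp 0 t > 0"
  and flat_exp_0_nonpos_arg: "t \<le> 0 \<Longrightarrow> flat_exp 0 t = 0"
  and flat_exp_0_nonneg: "flat_exp 0 t \<ge> 0"
  by (simp_all add: flat_exp_def)

definition smooth_step :: "real \<Rightarrow> real" where
  "smooth_step t = flat_exp 0 (1 - t) / (flat_exp 0 (1 - t) + flat_exp 0 t)"

lemma smooth_step_denominator_pos: "flat_exp 0 (1 - t) + flat_exp 0 t > 0"
  using flat_exp_0_pos[of t] flat_exp_0_pos[of "1 - t"] flat_exp_0_nonneg[of t] flat_exp_0_nonneg[of "1 - t"]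
  by (cases "t > 0") auto

lemma smooth_step_eq_1: "t \<le> 0 \<Longrightarrow> smooth_step t = 1"
  using flat_exp_0_pos[of "1 - t"] by (simp add: smooth_step_def flat_exp_0_nonpos_arg)

lemma smooth_step_eq_0: "t \<ge> 1 \<Longrightarrow> smooth_step t = 0"
  by (simp add: smooth_step_def flat_exp_0_nonpos_arg)

lemma smooth_step_bounds: "0 \<le> smooth_step t" "smooth_step t \<le> 1"
  using smooth_step_denominator_pos[of t] flat_exp_0_nonneg[of t] flat_exp_0_nonneg[of "1 - t"]
  by (simp_all add: smooth_step_def divide_le_eq_1)

lemma smooth_step_smooth_scalars: "smooth_step \<in> smooth_scalars"
proof -
  have flat_exp_derivatives: "\<forall>k t. (flat_exp k has_real_derivative flat_exp (Suc k) t) (at t)"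
    using flat_exp_has_derivative by blast
  have "(\<lambda>t. flat_exp 0 (1 - t) / (flat_exp 0 (1 - t) + flat_exp 0 t)) \<in> smooth_scalars"
  proof (intro smooth_scalars_divide smooth_scalars.add smooth_scalars.compose[OF flat_exp_derivatives]
      smooth_scalars_diff smooth_scalars.const smooth_scalars.linear bounded_linear_ident)
    show "flat_exp 0 (1 - t) + flat_exp 0 t \<noteq> 0" for t
      using smooth_step_denominator_pos[of t] by simp
  qed
  then show ?thesis
    by (simp add: smooth_step_def[abs_def])
qed

definition step_deriv :: "nat \<Rightarrow> real \<Rightarrow> real" where
  "step_deriv k = (deriv ^^ k) smooth_step"

lemma step_deriv_0 [simp]: "step_deriv 0 = smooth_step"
  by (simp add: step_deriv_def)

lemma step_deriv_smooth_scalars: "step_deriv k \<in> smooth_scalars"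
  by (induction k) (simp_all add: step_deriv_def smooth_step_smooth_scalars smooth_scalars_deriv(1))

lemma step_deriv_has_derivative: "\<forall>k t. (step_deriv k has_real_derivative step_deriv (Suc k) t) (at t)"
  using smooth_scalars_deriv(2)[OF step_deriv_smooth_scalars] by (simp add: step_deriv_def)

lemma step_deriv_1_at_0: "step_deriv 1 0 = 0"
  using DERIV_local_max[OF step_deriv_has_derivative[rule_format, of 0 0], of 1]
    smooth_step_bounds smooth_step_eq_1[of 0]
  by simp

lemma step_deriv_1_ge_1: "u \<ge> 1 \<Longrightarrow> step_deriv 1 u = 0"
  using DERIV_local_min[OF step_deriv_has_derivative[rule_format, of 0 u], of 1]
    smooth_step_bounds smooth_step_eq_0[of u]
  by simp

lemma deriv_zero_outside_unit_interval:
  fixes f :: "real \<Rightarrow> real"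
  assumes "(f has_real_derivative l) (at t)" "t < 0 \<or> t > 1"
    and "\<And>y. y < 0 \<Longrightarrow> f y = a" "\<And>y. y > 1 \<Longrightarrow> f y = b"
  shows "l = 0"
proof (rule DERIV_local_const[OF assms(1), of "min \<bar>t\<bar> \<bar>t - 1\<bar>"])
  show "0 < min \<bar>t\<bar> \<bar>t - 1\<bar>"
    using assms(2) by auto
  show "\<forall>y. \<bar>t - y\<bar> < min \<bar>t\<bar> \<bar>t - 1\<bar> \<longrightarrow> f t = f y"
  proof (intro allI impI)
    fix y assume "\<bar>t - y\<bar> < min \<bar>t\<bar> \<bar>t - 1\<bar>"
    then have "(t < 0 \<and> y < 0) \<or> (t > 1 \<and> y > 1)"
      using assms(2) by auto
    then show "f t = f y"
      using assms(3,4) by auto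
  qed
qed

lemma step_deriv_vanishes_outside: "t < 0 \<or> t > 1 \<Longrightarrow> step_deriv (Suc k) t = 0"
proof (induction k arbitrary: t)
  case 0
  show ?case
    by (rule deriv_zero_outside_unit_interval[OF step_deriv_has_derivative[rule_format, of 0 t] 0,
          where a = 1 and b = 0]) (simp_all add: smooth_step_eq_1 smooth_step_eq_0)
next
  case (Suc k)
  show ?case
    by (rule deriv_zero_outside_unit_interval[OF step_deriv_has_derivative[rule_format, of "Suc k" t] Suc.prems,
          where a = 0 and b = 0]) (simp_all add: Suc.IH)
qed

lemma bounded_range_if_vanishes_outside_compact:
  fixes f :: "'a::topological_space \<Rightarrow> 'b::real_normed_vector"
  assumes "continuous_on UNIV f" "compact K" "\<And>t. t \<notin> K \<Longrightarrow> f t = 0"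
  shows "bounded (range f)"
proof -
  have "range f \<subseteq> insert 0 (f ` K)"
    using assms(3) by auto
  moreover have "bounded (f ` K)"
    using assms(1,2) by (intro compact_imp_bounded compact_continuous_image) (auto intro: continuous_on_subset)
  ultimately show ?thesis
    by (metis bounded_insert bounded_subset)
qed

lemma step_deriv_bounded: "bounded (range (step_deriv (Suc k)))"
proof (rule bounded_range_if_vanishes_outside_compact)
  show "continuous_on UNIV (step_deriv (Suc k))"
    using DERIV_isCont[OF step_deriv_has_derivative[rule_format]] by (simp add: continuous_at_imp_continuous_on)
  show "step_deriv (Suc k) t = 0" if "t \<notin> {0..1}" for t
    using that step_deriv_vanishes_outside by auto
qed simp

definition perp :: "real^2 \<Rightarrow> real^2" where
  "perp x = vector [- (x$2), x$1]"

lemma perp_nth [simp]: "perp x $ 1 = - (x$2)" "perp x $ 2 = x $ 1"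
  by (simp_all add: perp_def)

lemma inner_real2: "(x::real^2) \<bullet> y = x$1 * y$1 + x$2 * y$2"
  by (simp add: inner_vec_def sum_2)

lemma perp_inner_self [simp]: "perp x \<bullet> x = 0"
  and inner_perp_self [simp]: "x \<bullet> perp x = 0"
  and perp_inner_perp [simp]: "perp x \<bullet> perp y = x \<bullet> y"
  by (simp_all add: inner_real2)

lemma norm_perp [simp]: "norm (perp x) = norm x"
  by (simp add: norm_eq_sqrt_inner)

lemma bounded_linear_perp: "bounded_linear perp"
proof -
  have "linear perp"
    by (rule linearI) (auto simp: vec_eq_iff forall_2)
  then show ?thesis
    by (simp add: linear_conv_bounded_linear)
qed

definition log_scale :: "real \<Rightarrow> real \<Rightarrow> real" where
  "log_scale e s = e * ln ((1 + s) / 2)"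

definition cutoff :: "real \<Rightarrow> real \<Rightarrow> real" where
  "cutoff e s = smooth_step (log_scale e s)"

definition cutoff' :: "real \<Rightarrow> real \<Rightarrow> real" where
  "cutoff' e s = step_deriv 1 (log_scale e s) * e / (1 + s)"

definition cutoff'' :: "real \<Rightarrow> real \<Rightarrow> real" where
  "cutoff'' e s = step_deriv 2 (log_scale e s) * (e / (1 + s))\<^sup>2 - step_deriv 1 (log_scale e s) * e / (1 + s)\<^sup>2"

lemma step_deriv_chain [derivative_intros]:
  "(f has_real_derivative f') (at x within S) \<Longrightarrow>
    ((\<lambda>x. step_deriv k (f x)) has_real_derivative step_deriv (Suc k) (f x) * f') (at x within S)"
  using DERIV_chain2[OF step_deriv_has_derivative[rule_format]] by blast

lemma log_scale_has_derivative: "s > -1 \<Longrightarrow> (log_scale e has_real_derivative e / (1 + s)) (at s)"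
  unfolding log_scale_def[abs_def]
  by (rule derivative_eq_intros refl | simp)+ (simp add: field_simps)

lemma cutoff_has_derivative: "s > -1 \<Longrightarrow> (cutoff e has_real_derivative cutoff' e s) (at s)"
  using step_deriv_chain[OF log_scale_has_derivative, of s 0 e]
  by (simp add: cutoff_def[abs_def] cutoff'_def)

lemma cutoff'_has_derivative:
  assumes "s > -1"
  shows "(cutoff' e has_real_derivative cutoff'' e s) (at s)"
proof -
  have "((\<lambda>s. e / (1 + s)) has_real_derivative - e / (1 + s)\<^sup>2) (at s)"
    using assms by (auto intro!: derivative_eq_intros simp: power2_eq_square)
  from DERIV_mult[OF step_deriv_chain[OF log_scale_has_derivative[OF assms], of 1] this]
  show ?thesis
    by (simp add: cutoff'_def[abs_def] cutoff''_def numeral_2_eq_2 power2_eq_square algebra_simps)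
qed

definition lift_field :: "real^2 \<Rightarrow> real \<Rightarrow> real^2 \<Rightarrow> real^2" where
  "lift_field l e x = cutoff e (x \<bullet> x) *\<^sub>R l - (2 * cutoff' e (x \<bullet> x) * (perp l \<bullet> x)) *\<^sub>R perp x"

definition lift_field_deriv :: "real^2 \<Rightarrow> real \<Rightarrow> real^2 \<Rightarrow> real^2 \<Rightarrow> real^2" where
  "lift_field_deriv l e x v =
     (2 * cutoff' e (x \<bullet> x) * (x \<bullet> v)) *\<^sub>R l
     - (4 * cutoff'' e (x \<bullet> x) * (x \<bullet> v) * (perp l \<bullet> x) + 2 * cutoff' e (x \<bullet> x) * (perp l \<bullet> v)) *\<^sub>R perp x
     - (2 * cutoff' e (x \<bullet> x) * (perp l \<bullet> x)) *\<^sub>R perp v"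

lemma has_derivative_of_inner_self:
  assumes "(f has_real_derivative f') (at (x \<bullet> x))"
  shows "((\<lambda>x. f (x \<bullet> x)) has_derivative (\<lambda>v. f' * (2 * (x \<bullet> v)))) (at x)"
proof -
  have "((\<lambda>x. x \<bullet> x) has_derivative (\<lambda>v. 2 * (x \<bullet> v))) (at x)"
    by (rule derivative_eq_intros refl)+ (auto simp: inner_commute)
  from has_derivative_compose[OF this assms[unfolded has_field_derivative_def]] show ?thesis .
qed

lemma lift_field_has_derivative: "(lift_field l e has_derivative lift_field_deriv l e x) (at x)"
proof -
  have "x \<bullet> x > -1"
    using inner_ge_zero[of x] by linarith
  note cutoff = has_derivative_of_inner_self[OF cutoff_has_derivative[OF this]]
    and cutoff' = has_derivative_of_inner_self[OF cutoff'_has_derivative[OF this]]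
  have perp_l: "((\<lambda>x. perp l \<bullet> x) has_derivative (\<lambda>v. perp l \<bullet> v)) (at x)"
    by (intro bounded_linear_imp_has_derivative bounded_linear_inner_right)
  have perp: "(perp has_derivative perp) (at x)"
    by (intro bounded_linear_imp_has_derivative bounded_linear_perp)
  show ?thesis
    unfolding lift_field_def[abs_def]
    apply (rule has_derivative_eq_rhs)
     apply (rule cutoff cutoff' perp_l perp derivative_eq_intros refl | simp)+
    apply (simp add: fun_eq_iff lift_field_deriv_def algebra_simps)
    done
qed

lemma frechet_derivative_lift_field: "frechet_derivative (lift_field l e) (at x) = lift_field_deriv l e x"
  using lift_field_has_derivative frechet_derivative_at by metis

lemma lift_field_smooth: "smooth (lift_field l e)"
proof (rule smooth_fields_smooth)
  have log_scale: "(\<lambda>x::real^2. log_scale e (x \<bullet> x)) \<in> smooth_scalars"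
  proof -
    have "(\<lambda>x::real^2. e * ln ((1 + x \<bullet> x) / 2)) \<in> smooth_scalars"
      by (intro smooth_scalars.mult smooth_scalars.const smooth_scalars.ln smooth_scalars_divide
          smooth_scalars.add smooth_scalars.inner_self) (simp_all add: add_pos_nonneg)
    then show ?thesis
      by (simp add: log_scale_def)
  qed
  note step = smooth_scalars.compose[OF step_deriv_has_derivative log_scale]
  have cutoff': "(\<lambda>x::real^2. cutoff' e (x \<bullet> x)) \<in> smooth_scalars"
  proof -
    have "(\<lambda>x::real^2. step_deriv 1 (log_scale e (x \<bullet> x)) * e / (1 + x \<bullet> x)) \<in> smooth_scalars"
      by (intro smooth_scalars_divide smooth_scalars.mult step smooth_scalars.const smooth_scalars.add
          smooth_scalars.inner_self) (simp add: add_pos_nonneg less_imp_neq[symmetric])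
    then show ?thesis
      by (simp add: cutoff'_def)
  qed
  have perp_component: "bounded_linear (\<lambda>x. perp x \<bullet> i)" for i
    using bounded_linear_compose[OF bounded_linear_inner_left[of i] bounded_linear_perp] by (simp add: o_def)
  have "(\<lambda>x. step_deriv 0 (log_scale e (x \<bullet> x)) * (l \<bullet> i) - 2 * cutoff' e (x \<bullet> x) * (perp l \<bullet> x) * (perp x \<bullet> i))
      \<in> smooth_scalars" for i
    by (intro smooth_scalars_diff smooth_scalars.mult step smooth_scalars.const cutoff'
        smooth_scalars.linear perp_component bounded_linear_inner_right)
  then show "lift_field l e \<in> smooth_fields"
    by (simp add: smooth_fields_def lift_field_def cutoff_def inner_diff_left)
qed

lemma divergence_lift_field: "divergence (lift_field l e) x = 0"
proof -
  define a where "a = 2 * cutoff' e (x \<bullet> x)"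
  define b where "b = 4 * cutoff'' e (x \<bullet> x) * (perp l \<bullet> x)"
  have diagonal: "lift_field_deriv l e x i \<bullet> i
      = a * ((x \<bullet> i) * (l \<bullet> i)) - b * ((x \<bullet> i) * (perp x \<bullet> i)) - a * ((perp l \<bullet> i) * (perp x \<bullet> i))" for i
    by (simp add: lift_field_deriv_def a_def b_def inner_diff_left inner_add_left algebra_simps)
  have "divergence (lift_field l e) x = (\<Sum>i\<in>Basis. lift_field_deriv l e x i \<bullet> i)"
    by (simp add: divergence_def frechet_derivative_lift_field)
  also have "\<dots> = a * (x \<bullet> l) - b * (x \<bullet> perp x) - a * (perp l \<bullet> perp x)"
    by (simp add: diagonal sum_subtractf sum_distrib_left[symmetric] euclidean_inner[symmetric])
  also have "\<dots> = 0"
    by (simp add: inner_commute)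
  finally show ?thesis .
qed

lemma lift_field_on_unit_circle: "norm x = 1 \<Longrightarrow> lift_field l e x = l"
  by (simp add: lift_field_def cutoff_def cutoff'_def log_scale_def power2_norm_eq_inner[symmetric]
      smooth_step_eq_1 step_deriv_1_at_0[unfolded One_nat_def])

lemma lift_field_vanishes_far:
  assumes "e > 0" "x \<bullet> x \<ge> 2 * exp (1 / e)"
  shows "lift_field l e x = 0"
proof -
  have "exp (1 / e) \<le> (1 + x \<bullet> x) / 2"
    using assms(2) by simp
  then have "1 / e \<le> ln ((1 + x \<bullet> x) / 2)"
    using exp_le_cancel_iff by (metis exp_gt_zero exp_ln order_less_le_trans)
  then have "log_scale e (x \<bullet> x) \<ge> 1"
    using assms(1) by (simp add: log_scale_def field_simps)
  then show ?thesis
    by (simp add: lift_field_def cutoff_def cutoff'_def smooth_step_eq_0 step_deriv_1_ge_1[unfolded One_nat_def])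
qed

lemma le_one_plus_square: "(r::real) \<le> 1 + r\<^sup>2"
proof -
  have "2 * r \<le> 1 + r\<^sup>2"
    using zero_le_power2[of "r - 1"] by (simp add: power2_diff)
  then show ?thesis
    using zero_le_power2[of r] by linarith
qed

lemma cube_le_square_one_plus_square: "(r::real) ^ 3 \<le> (1 + r\<^sup>2)\<^sup>2"
proof -
  have "2 * r ^ 3 \<le> r\<^sup>2 + r ^ 4"
    using zero_le_power2[of "r * (r - 1)"]
    by (simp add: power2_eq_square power3_eq_cube power4_eq_xxxx algebra_simps)
  moreover have "(1 + r\<^sup>2)\<^sup>2 = 1 + 2 * r\<^sup>2 + r ^ 4"
    by algebra
  moreover have "0 \<le> r ^ 4"
    by simp
  ultimately show ?thesis
    using zero_le_power2[of r] by linarith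
qed

lemma bounded_lift_field_support: "e > 0 \<Longrightarrow> bounded {x. lift_field l e x \<noteq> 0}"
proof -
  assume "e > 0"
  have "{x. lift_field l e x \<noteq> 0} \<subseteq> cball 0 (1 + 2 * exp (1 / e))"
  proof
    fix x assume "x \<in> {x. lift_field l e x \<noteq> 0}"
    then have "x \<bullet> x < 2 * exp (1 / e)"
      using lift_field_vanishes_far[OF \<open>e > 0\<close>, of x l] by force
    moreover have "norm x \<le> 1 + x \<bullet> x"
      using le_one_plus_square[of "norm x"] by (simp add: power2_norm_eq_inner)
    ultimately show "x \<in> cball 0 (1 + 2 * exp (1 / e))"
      by simp
  qed
  then show ?thesis
    using bounded_cball bounded_subset by blast
qed

lemma cutoff'_bound:
  assumes "\<forall>t. \<bar>step_deriv 1 t\<bar> \<le> M1" "e > 0" "r \<ge> 0"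
  shows "\<bar>cutoff' e (r\<^sup>2)\<bar> * r \<le> M1 * e"
proof -
  have "\<bar>cutoff' e (r\<^sup>2)\<bar> * r = \<bar>step_deriv 1 (log_scale e (r\<^sup>2))\<bar> * e * (r / (1 + r\<^sup>2))"
    using assms(2,3) by (simp add: cutoff'_def abs_mult abs_divide add_pos_nonneg)
  also have "\<dots> \<le> M1 * e * 1"
    using assms le_one_plus_square[of r] order_trans[OF abs_ge_zero assms(1)[rule_format]]
    by (intro mult_mono) (auto simp: divide_le_eq_1 add_pos_nonneg)
  finally show ?thesis by simp
qed

lemma cutoff''_bound:
  assumes "\<forall>t. \<bar>step_deriv 1 t\<bar> \<le> M1" "\<forall>t. \<bar>step_deriv 2 t\<bar> \<le> M2" "0 < e" "e \<le> 1" "r \<ge> 0"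
  shows "\<bar>cutoff'' e (r\<^sup>2)\<bar> * r ^ 3 \<le> (M1 + M2) * e"
proof -
  define d where "d = 1 + r\<^sup>2"
  define h1 where "h1 = step_deriv 1 (log_scale e (r\<^sup>2))"
  define h2 where "h2 = step_deriv 2 (log_scale e (r\<^sup>2))"
  have d: "d \<ge> 1"
    by (simp add: d_def)
  have M: "\<bar>h1\<bar> \<le> M1" "\<bar>h2\<bar> \<le> M2" "0 \<le> M1" "0 \<le> M2"
    using assms(1,2) unfolding h1_def h2_def by (meson abs_ge_zero order_trans)+
  have "\<bar>cutoff'' e (r\<^sup>2)\<bar> = \<bar>h2 * (e / d)\<^sup>2 - h1 * e / d\<^sup>2\<bar>"
    by (simp add: cutoff''_def d_def h1_def h2_def)
  also have "\<dots> \<le> \<bar>h2\<bar> * (e / d)\<^sup>2 + \<bar>h1\<bar> * e / d\<^sup>2"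
    using abs_triangle_ineq4[of "h2 * (e / d)\<^sup>2" "h1 * e / d\<^sup>2"] assms(3) by (simp add: abs_mult)
  also have "\<dots> \<le> M2 * (e / d)\<^sup>2 + M1 * e / d\<^sup>2"
    using M assms(3) by (intro add_mono mult_right_mono divide_right_mono) auto
  also have "\<dots> = (M2 * e\<^sup>2 + M1 * e) / d\<^sup>2"
    by (simp add: add_divide_distrib power_divide)
  finally have "\<bar>cutoff'' e (r\<^sup>2)\<bar> * r ^ 3 \<le> (M2 * e\<^sup>2 + M1 * e) / d\<^sup>2 * d\<^sup>2"
    using cube_le_square_one_plus_square[of r] assms(5) unfolding d_def by (intro mult_mono) auto
  also have "\<dots> = M2 * e\<^sup>2 + M1 * e"
    using d by simp
  also have "\<dots> \<le> (M1 + M2) * e"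
    using M assms(3,4) by (simp add: power2_eq_square algebra_simps mult_left_mono mult_right_le_one_le)
  finally show ?thesis .
qed

lemma norm_lift_field_deriv_le:
  "norm (lift_field_deriv l e x v)
    \<le> (6 * \<bar>cutoff' e (x \<bullet> x)\<bar> * norm x + 4 * \<bar>cutoff'' e (x \<bullet> x)\<bar> * norm x ^ 3) * norm l * norm v"
proof -
  define A where "A = cutoff' e (x \<bullet> x)"
  define B where "B = cutoff'' e (x \<bullet> x)"
  have xv: "\<bar>x \<bullet> v\<bar> \<le> norm x * norm v"
    by (rule Cauchy_Schwarz_ineq2)
  have lx: "\<bar>perp l \<bullet> x\<bar> \<le> norm l * norm x" and lv: "\<bar>perp l \<bullet> v\<bar> \<le> norm l * norm v"
    using Cauchy_Schwarz_ineq2[of "perp l"] by simp_all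
  have "norm (lift_field_deriv l e x v)
      \<le> \<bar>2 * A * (x \<bullet> v)\<bar> * norm l + \<bar>4 * B * (x \<bullet> v) * (perp l \<bullet> x) + 2 * A * (perp l \<bullet> v)\<bar> * norm x
        + \<bar>2 * A * (perp l \<bullet> x)\<bar> * norm v"
    unfolding lift_field_deriv_def A_def B_def
    by (rule order_trans[OF norm_triangle_ineq4] add_mono order_trans[OF norm_triangle_ineq4] | simp)+
  also have "\<dots> \<le> 2 * \<bar>A\<bar> * (norm x * norm v) * norm l
      + (4 * \<bar>B\<bar> * ((norm x * norm v) * (norm l * norm x)) + 2 * \<bar>A\<bar> * (norm l * norm v)) * norm x
      + 2 * \<bar>A\<bar> * (norm l * norm x) * norm v"
  proof -
    have "\<bar>4 * B * (x \<bullet> v) * (perp l \<bullet> x)\<bar> = 4 * \<bar>B\<bar> * (\<bar>x \<bullet> v\<bar> * \<bar>perp l \<bullet> x\<bar>)"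
      by (simp add: abs_mult)
    also have "\<dots> \<le> 4 * \<bar>B\<bar> * ((norm x * norm v) * (norm l * norm x))"
      by (intro mult_left_mono mult_mono xv lx) simp_all
    finally have "\<bar>4 * B * (x \<bullet> v) * (perp l \<bullet> x)\<bar> \<le> \<dots>" .
    moreover have "\<bar>2 * A * c\<bar> \<le> 2 * \<bar>A\<bar> * d" if "\<bar>c\<bar> \<le> d" for c d
      using mult_left_mono[OF that, of "2 * \<bar>A\<bar>"] by (simp add: abs_mult)
    ultimately show ?thesis
      using xv lx lv by (intro add_mono mult_right_mono order_trans[OF abs_triangle_ineq]) auto
  qed
  also have "\<dots> = (6 * \<bar>A\<bar> * norm x + 4 * \<bar>B\<bar> * norm x ^ 3) * norm l * norm v"
    by (simp add: algebra_simps power3_eq_cube)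
  finally show ?thesis
    by (simp add: A_def B_def)
qed

lemma lift_field_gradient_le:
  "\<exists>C\<ge>0. \<forall>e\<in>{0<..1}. \<forall>x. onorm (frechet_derivative (lift_field l e) (at x)) \<le> C * e"
proof -
  obtain M1 M2 where M1: "\<forall>t. \<bar>step_deriv 1 t\<bar> \<le> M1" and M2: "\<forall>t. \<bar>step_deriv 2 t\<bar> \<le> M2"
    using step_deriv_bounded[of 0] step_deriv_bounded[of 1] by (auto simp: bounded_real numeral_2_eq_2)
  have "onorm (frechet_derivative (lift_field l e) (at x)) \<le> ((10 * M1 + 4 * M2) * norm l) * e"
    if e: "e \<in> {0<..1}" for e x
    unfolding frechet_derivative_lift_field
  proof (rule onorm_le)
    fix v
    have "norm (lift_field_deriv l e x v)
        \<le> (6 * \<bar>cutoff' e (x \<bullet> x)\<bar> * norm x + 4 * \<bar>cutoff'' e (x \<bullet> x)\<bar> * norm x ^ 3) * norm l * norm v"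
      by (rule norm_lift_field_deriv_le)
    also have "\<dots> \<le> (6 * (M1 * e) + 4 * ((M1 + M2) * e)) * norm l * norm v"
      using cutoff'_bound[OF M1, of e "norm x"] cutoff''_bound[OF M1 M2, of e "norm x"] e
      by (intro mult_right_mono add_mono) (auto simp: power2_norm_eq_inner)
    finally show "norm (lift_field_deriv l e x v) \<le> (10 * M1 + 4 * M2) * norm l * e * norm v"
      by (simp add: algebra_simps)
  qed
  moreover have "0 \<le> (10 * M1 + 4 * M2) * norm l"
    using order_trans[OF abs_ge_zero M1[rule_format]] order_trans[OF abs_ge_zero M2[rule_format]] by simp
  ultimately show ?thesis
    by blast
qed

theorem lemma9:
  fixes \<Psi> :: "real^2 \<Rightarrow> real^2" and l :: "real^2"
  assumes "in_H \<Psi>"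
    and "AE x in lebesgue. x \<in> S0 \<longrightarrow> \<Psi> x = l"
  shows "\<exists>\<Psi>t :: real \<Rightarrow> real^2 \<Rightarrow> real^2.
           (\<forall>\<epsilon>\<in>{0<..1}.
              smooth (\<Psi>t \<epsilon>) \<and>
              compact (closure {x \<in> closure F0. \<Psi>t \<epsilon> x \<noteq> 0}) \<and>
              (\<forall>x\<in>closure F0. divergence (\<Psi>t \<epsilon>) x = 0) \<and>
              (\<forall>x\<in>frontier S0. \<Psi>t \<epsilon> x = l)) \<and>
           (\<forall>\<delta>>0. \<exists>e0>0. \<forall>\<epsilon>\<in>{0<..1}. \<epsilon> < e0 \<longrightarrow>
              (\<forall>x\<in>F0. onorm (frechet_derivative (\<Psi>t \<epsilon>) (at x)) \<le> \<delta>))"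
proof (intro exI[of _ "lift_field l"] conjI ballI allI impI)
  fix e :: real assume e: "e \<in> {0<..1}"
  show "smooth (lift_field l e)"
    by (rule lift_field_smooth)
  show "compact (closure {x \<in> closure F0. lift_field l e x \<noteq> 0})"
    using bounded_lift_field_support[of e l] e by (auto intro: bounded_subset)
  show "divergence (lift_field l e) x = 0" for x
    by (rule divergence_lift_field)
  show "lift_field l e x = l" if "x \<in> frontier S0" for x
    using that by (intro lift_field_on_unit_circle) (simp add: S0_def)
next
  fix \<delta> :: real assume "\<delta> > 0"
  obtain C where "C \<ge> 0" and C: "\<And>e x. e \<in> {0<..1} \<Longrightarrow> onorm (frechet_derivative (lift_field l e) (at x)) \<le> C * e"
    using lift_field_gradient_le by blast
  show "\<exists>e0>0. \<forall>\<epsilon>\<in>{0<..1}. \<epsilon> < e0 \<longrightarrow> (\<forall>x\<in>F0. onorm (frechet_derivative (lift_field l \<epsilon>) (at x)) \<le> \<delta>)"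
  proof (intro exI[of _ "\<delta> / (C + 1)"] conjI ballI impI)
    show "0 < \<delta> / (C + 1)"
      using \<open>\<delta> > 0\<close> \<open>C \<ge> 0\<close> by simp
    fix e x assume e: "e \<in> {0<..1}" "e < \<delta> / (C + 1)"
    have "onorm (frechet_derivative (lift_field l e) (at x)) \<le> C * e"
      using C e(1) .
    also have "\<dots> \<le> C * (\<delta> / (C + 1))"
      using e \<open>C \<ge> 0\<close> by (intro mult_left_mono) auto
    also have "\<dots> \<le> \<delta>"
      using \<open>\<delta> > 0\<close> \<open>C \<ge> 0\<close> by (simp add: field_simps)
    finally show "onorm (frechet_derivative (lift_field l e) (at x)) \<le> \<delta>" .
  qed
qed

end
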